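(* In the peer prediction mechanism, for every $n\ge 2$ and every strictly proper scoring rule $PS$, the truthful profile $\Sigma^*$ is an ex-ante Bayesian $k_E$-strong equilibrium. Here $$k_E^h=\begin{cases}\left\lfloor \dfrac{(n-1)\,\mathbb E_{s\sim P_\ell}[PS(s,P_\ell)-PS(s,P_h)]}{PS(h,P_h)-PS(\ell,P_h)}\right\rfloor+1 & \text{if } PS(h,P_h)>PS(\ell,P_h),\\ n&\text{otherwise,}\end{cases}$$ $$k_E^\ell=\begin{cases}\left\lfloor \dfrac{(n-1)\,\mathbb E_{s\sim P_h}[PS(s,P_h)-PS(s,P_\ell)]}{PS(\ell,P_\ell)-PS(h,P_\ell)}\right\rfloor+1 & \text{if } PS(\ell,P_\ell)>PS(h,P_\ell),\\ n&\text{otherwise,}\end{cases}$$ and $k_E=\min(k_E^h,k_E^\ell,n)$. Moreover, for every integer $k$ with $k_E<k\le n$, $\Sigma^*$ is not an ex-ante Bayesian $k$-strong equilibrium.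
   Context: Peer prediction setting. There are $n\ge 2$ agents $[n]$. Each agent $i$ privately observes a signal $\Psi_i\in\{\ell,h\}$ and reports $r_i\in\{\ell,h\}$. Signals are drawn from a common prior $Q$ on $\{\ell,h\}^n$ that is symmetric, i.e., invariant under permutations of the agents. $P(s)$ denotes the marginal probability that an agent has signal $s$. $P(s\mid s')$ denotes the probability that another agent $j\ne i$ has signal $s$ given that agent $i$ has signal $s'$. $P_{s'}=P(\cdot\mid s')$ is the corresponding distribution on $\{\ell,h\}$. Standing assumptions: $P(\ell),P(h)>0$, $P(h\mid h)>P(h\mid\ell)$, $P(h\mid\ell)>0$ and $P(\ell\mid h)>0$. A scoring rule $PS:\{\ell,h\}\times\Delta_{\{\ell,h\}}\to\mathbb R$ is strictly proper if $\mathbb E_{s\sim p}[PS(s,p)]>\mathbb E_{s\sim p}[PS(s,q)]$ for all distributions $p\ne q$. The mechanism gives agent $i$ the utility $v_i=\frac1{n-1}\sum_{j\ne i}PS(r_j,P_{r_i})$. A strategy is a pair $\sigma=(\beta_\ell,\beta_h)\in[0,1]^2$, where $\beta_\ell$ and $\beta_h$ are the probabilities of reporting $h$ given signal $\ell$ and signal $h$, respectively. Given signals, reports are drawn independently. The truthful strategy is $(0,1)$, and $\Sigma^*$ is the profile in which all agents play it. The ex-ante utility $u_i(\Sigma)$ is the expectation of $v_i$. The interim utility $u_i(\Sigma\mid s)$ is its expectation conditioned on $\Psi_i=s$. A profile $\Sigma$ is an ex-ante Bayesian $k$-strong equilibrium if there is no set $D\subseteq[n]$ with $|D|\le k$ and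 no profile $\Sigma'$ such that: (1) agents outside $D$ keep their strategies from $\Sigma$; (2) $u_i(\Sigma')\ge u_i(\Sigma)$ for all $i\in D$; and (3) $u_i(\Sigma')>u_i(\Sigma)$ for some $i\in D$. *)

theory Defs
  imports "HOL-Probability.Probability" "HOL-Combinatorics.Permutations"
begin

(* Signals and reports: True = h, False = l.
   Agents are 0..n-1; a signal (or report) profile is a bool list of length n. *)

definition profiles :: "nat \<Rightarrow> bool list set" where
  "profiles n = {xs. length xs = n}"

definition is_prior :: "nat \<Rightarrow> (bool list \<Rightarrow> real) \<Rightarrow> bool" where
  "is_prior n Q \<longleftrightarrow> (\<forall>xs\<in>profiles n. Q xs \<ge> 0) \<and> (\<Sum>xs\<in>profiles n. Q xs) = 1"

definition symmetric_prior :: "nat \<Rightarrow> (bool list \<Rightarrow> real) \<Rightarrow> bool" where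
  "symmetric_prior n Q \<longleftrightarrow>
     (\<forall>\<pi> xs. \<pi> permutes {..<n} \<longrightarrow> length xs = n \<longrightarrow> Q (permute_list \<pi> xs) = Q xs)"

(* marginal probability P(s) that an agent (agent 0; by symmetry any agent) has signal s *)
definition marg :: "nat \<Rightarrow> (bool list \<Rightarrow> real) \<Rightarrow> bool \<Rightarrow> real" where
  "marg n Q s = (\<Sum>xs\<in>profiles n. if xs ! 0 = s then Q xs else 0)"

(* P(s | s'): probability that another agent (agent 1) has s given agent 0 has s' *)
definition cond :: "nat \<Rightarrow> (bool list \<Rightarrow> real) \<Rightarrow> bool \<Rightarrow> bool \<Rightarrow> real" where
  "cond n Q s s' = (\<Sum>xs\<in>profiles n. if xs ! 0 = s' \<and> xs ! 1 = s then Q xs else 0) / marg n Q s'"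

definition Pc :: "nat \<Rightarrow> (bool list \<Rightarrow> real) \<Rightarrow> bool \<Rightarrow> bool pmf" where
  "Pc n Q s' = bernoulli_pmf (cond n Q True s')"

definition Ex :: "bool pmf \<Rightarrow> (bool \<Rightarrow> real) \<Rightarrow> real" where
  "Ex p f = (\<Sum>s\<in>UNIV. pmf p s * f s)"

definition strictly_proper :: "(bool \<Rightarrow> bool pmf \<Rightarrow> real) \<Rightarrow> bool" where
  "strictly_proper PS \<longleftrightarrow> (\<forall>p q. p \<noteq> q \<longrightarrow> Ex p (\<lambda>s. PS s p) > Ex p (\<lambda>s. PS s q))"

(* a strategy is (beta_l, beta_h): probabilities of reporting h given signal l resp. h *)
definition is_strategy :: "real \<times> real \<Rightarrow> bool" where
  "is_strategy \<sigma> \<longleftrightarrow> 0 \<le> fst \<sigma> \<and> fst \<sigma> \<le> 1 \<and> 0 \<le> snd \<sigma> \<and> snd \<sigma> \<le> 1"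

definition is_profile :: "nat \<Rightarrow> (nat \<Rightarrow> real \<times> real) \<Rightarrow> bool" where
  "is_profile n \<Sigma> \<longleftrightarrow> (\<forall>i<n. is_strategy (\<Sigma> i))"

definition rprob :: "real \<times> real \<Rightarrow> bool \<Rightarrow> bool \<Rightarrow> real" where
  "rprob \<sigma> s r = (let \<beta> = (if s then snd \<sigma> else fst \<sigma>) in if r then \<beta> else 1 - \<beta>)"

definition truthful :: "real \<times> real" where
  "truthful = (0, 1)"

definition payment :: "nat \<Rightarrow> (bool list \<Rightarrow> real) \<Rightarrow> (bool \<Rightarrow> bool pmf \<Rightarrow> real) \<Rightarrow> nat \<Rightarrow> bool list \<Rightarrow> real" where
  "payment n Q PS i rs = (1 / (real n - 1)) * (\<Sum>j\<in>{..<n} - {i}. PS (rs ! j) (Pc n Q (rs ! i)))"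

definition util :: "nat \<Rightarrow> (bool list \<Rightarrow> real) \<Rightarrow> (bool \<Rightarrow> bool pmf \<Rightarrow> real) \<Rightarrow> (nat \<Rightarrow> real \<times> real) \<Rightarrow> nat \<Rightarrow> real" where
  "util n Q PS \<Sigma> i =
     (\<Sum>xs\<in>profiles n. \<Sum>rs\<in>profiles n.
        Q xs * (\<Prod>j<n. rprob (\<Sigma> j) (xs ! j) (rs ! j)) * payment n Q PS i rs)"

definition ex_ante_k_strong_eq ::
  "nat \<Rightarrow> (bool list \<Rightarrow> real) \<Rightarrow> (bool \<Rightarrow> bool pmf \<Rightarrow> real) \<Rightarrow> int \<Rightarrow> (nat \<Rightarrow> real \<times> real) \<Rightarrow> bool" where
  "ex_ante_k_strong_eq n Q PS k \<Sigma> \<longleftrightarrow>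
     \<not> (\<exists>D \<Sigma>'. D \<subseteq> {..<n} \<and> int (card D) \<le> k \<and> is_profile n \<Sigma>' \<and>
            (\<forall>j\<in>{..<n} - D. \<Sigma>' j = \<Sigma> j) \<and>
            (\<forall>i\<in>D. util n Q PS \<Sigma>' i \<ge> util n Q PS \<Sigma> i) \<and>
            (\<exists>i\<in>D. util n Q PS \<Sigma>' i > util n Q PS \<Sigma> i))"

definition kE_h :: "nat \<Rightarrow> (bool list \<Rightarrow> real) \<Rightarrow> (bool \<Rightarrow> bool pmf \<Rightarrow> real) \<Rightarrow> int" where
  "kE_h n Q PS =
     (let Pl = Pc n Q False; Ph = Pc n Q True in
      if PS True Ph > PS False Ph
      then \<lfloor>(real n - 1) * Ex Pl (\<lambda>s. PS s Pl - PS s Ph) / (PS True Ph - PS False Ph)\<rfloor> + 1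
      else int n)"

definition kE_l :: "nat \<Rightarrow> (bool list \<Rightarrow> real) \<Rightarrow> (bool \<Rightarrow> bool pmf \<Rightarrow> real) \<Rightarrow> int" where
  "kE_l n Q PS =
     (let Pl = Pc n Q False; Ph = Pc n Q True in
      if PS False Pl > PS True Pl
      then \<lfloor>(real n - 1) * Ex Ph (\<lambda>s. PS s Ph - PS s Pl) / (PS False Pl - PS True Pl)\<rfloor> + 1
      else int n)"

definition kE :: "nat \<Rightarrow> (bool list \<Rightarrow> real) \<Rightarrow> (bool \<Rightarrow> bool pmf \<Rightarrow> real) \<Rightarrow> int" where
  "kE n Q PS = min (min (kE_h n Q PS) (kE_l n Q PS)) (int n)"

end

theory Submission
  imports Defs
begin

(* Since the prior is symmetric and reports are drawn independently, the utility of agent i is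
   the average, over the other agents j, of a pair value depending only on the strategies of i
   and j. Relative to truthful play, the pair value splits into a spillover term depending only
   on j's strategy (what i gains from j's misreports), minus i's own loss from misreporting,
   minus a nonnegative interaction term. In a deviating coalition of size k, the misreports of
   each member help only the other k - 1 members but cost her her own loss against all n - 1
   partners; for k \<le> kE this makes the total gain of the coalition nonpositive. Conversely,
   if k > kE then k agents who all report h (or all report l) have no interaction term and each
   of them strictly gains. *)

lemma finite_profiles [simp]: "finite (profiles n)"
proof -
  have "profiles n = {xs. set xs \<subseteq> (UNIV :: bool set) \<and> length xs = n}"
    by (auto simp: profiles_def)
  then show ?thesis
    using finite_lists_length_eq[of "UNIV :: bool set" n] by simp
qed

lemma profiles_Suc: "profiles (Suc n) = (\<lambda>(x, xs). x # xs) ` (UNIV \<times> profiles n)"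
  unfolding profiles_def by (auto simp: image_def length_Suc_conv)

lemma sum_profiles_prod:
  "(\<Sum>rs\<in>profiles n. \<Prod>k<n. w k (rs ! k)) = (\<Prod>k<n. \<Sum>x\<in>UNIV. (w k x :: real))"
proof (induction n arbitrary: w)
  case 0
  then show ?case by (simp add: profiles_def)
next
  case (Suc n)
  have inj: "inj_on (\<lambda>(x, xs). x # xs) (UNIV \<times> profiles n)"
    by (auto simp: inj_on_def)
  have "(\<Sum>rs\<in>profiles (Suc n). \<Prod>k<Suc n. w k (rs ! k))
      = (\<Sum>p\<in>UNIV \<times> profiles n. \<Prod>k<Suc n. w k ((fst p # snd p) ! k))"
    unfolding profiles_Suc
    by (subst sum.reindex[OF inj]) (auto intro!: sum.cong simp: case_prod_beta)
  also have "\<dots> = (\<Sum>x\<in>UNIV. \<Sum>xs\<in>profiles n. w 0 x * (\<Prod>k<n. w (Suc k) (xs ! k)))"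
    by (simp add: sum.cartesian_product prod.lessThan_Suc_shift case_prod_beta
        del: prod.lessThan_Suc)
  also have "\<dots> = (\<Sum>x\<in>UNIV. w 0 x * (\<Prod>k<n. \<Sum>y\<in>UNIV. w (Suc k) y))"
    by (simp add: sum_distrib_left[symmetric] Suc.IH[of "\<lambda>k. w (Suc k)"])
  also have "\<dots> = (\<Prod>k<Suc n. \<Sum>x\<in>UNIV. w k x)"
    by (simp add: prod.lessThan_Suc_shift sum_distrib_right del: prod.lessThan_Suc)
  finally show ?case .
qed

lemma sum_profiles_prod_pair:
  assumes "i < n" "j < n" "i \<noteq> j" and weights: "\<And>k. k < n \<Longrightarrow> w k True + w k False = (1 :: real)"
  shows "(\<Sum>rs\<in>profiles n. (\<Prod>k<n. w k (rs ! k)) * g (rs ! i) (rs ! j))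
       = (\<Sum>r\<in>UNIV. \<Sum>r'\<in>UNIV. w i r * w j r' * g r r')"
proof -
  define w' where "w' r r' k x = w k x * (if k = i then (if x = r then 1 else 0) else 1)
      * (if k = j then (if x = r' then 1 else 0) else 1)" for r r' k x
  have indicator_prod: "(\<Prod>k<n. w k (rs ! k)) * (if rs ! i = r \<and> rs ! j = r' then 1 else 0)
      = (\<Prod>k<n. w' r r' k (rs ! k))" for rs r r'
    using assms(1,2) unfolding w'_def by (simp add: prod.distrib prod.delta)
  have sum_w': "(\<Sum>x\<in>UNIV. w' r r' k x) = (if k = i then w i r else if k = j then w j r' else 1)"
    if "k < n" for r r' k
    using assms(3) weights[OF that] unfolding w'_def by (auto simp: UNIV_bool)
  have prod_w': "(\<Prod>k<n. if k = i then w i r else if k = j then w j r' else 1) = w i r * w j r'"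
    for r r'
  proof -
    have "(\<Prod>k<n. if k = i then w i r else if k = j then w j r' else 1)
        = (\<Prod>k<n. (if k = i then w i r else 1) * (if k = j then w j r' else 1))"
      using assms(3) by (intro prod.cong) auto
    then show ?thesis
      using assms(1,2) by (simp add: prod.distrib prod.delta)
  qed
  have "(\<Sum>rs\<in>profiles n. (\<Prod>k<n. w k (rs ! k)) * g (rs ! i) (rs ! j))
      = (\<Sum>rs\<in>profiles n. \<Sum>r\<in>UNIV. \<Sum>r'\<in>UNIV.
           g r r' * ((\<Prod>k<n. w k (rs ! k)) * (if rs ! i = r \<and> rs ! j = r' then 1 else 0)))"
    by (intro sum.cong) (auto simp: UNIV_bool)
  also have "\<dots> = (\<Sum>r\<in>UNIV. \<Sum>r'\<in>UNIV. g r r' * (\<Sum>rs\<in>profiles n. \<Prod>k<n. w' r r' k (rs ! k)))"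
    by (simp add: indicator_prod sum_distrib_left sum.swap[of _ "profiles n"])
  also have "\<dots> = (\<Sum>r\<in>UNIV. \<Sum>r'\<in>UNIV. w i r * w j r' * g r r')"
  proof -
    have "(\<Sum>rs\<in>profiles n. \<Prod>k<n. w' r r' k (rs ! k)) = w i r * w j r'" for r r'
      unfolding sum_profiles_prod prod_w'[symmetric] by (rule prod.cong) (auto simp: sum_w')
    then show ?thesis by (simp add: mult_ac)
  qed
  finally show ?thesis .
qed

lemma permute_list_bij_betw_profiles:
  assumes "p permutes {..<n}"
  shows "bij_betw (permute_list p) (profiles n) (profiles n)"
proof (rule bij_betw_byWitness[where f'="permute_list (inv p)"])
  have inv_p: "inv p permutes {..<n}"
    using assms by (rule permutes_inv)
  show "\<forall>xs\<in>profiles n. permute_list (inv p) (permute_list p xs) = xs"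
    using permute_list_compose[of "inv p" _ p, symmetric] inv_p permutes_inv_o(1)[OF assms]
    by (auto simp: profiles_def)
  show "\<forall>xs\<in>profiles n. permute_list p (permute_list (inv p) xs) = xs"
    using permute_list_compose[of p _ "inv p", symmetric] assms permutes_inv_o(2)[OF assms]
    by (auto simp: profiles_def)
qed (auto simp: profiles_def)

lemma symmetric_prior_sum_pair:
  assumes "symmetric_prior n Q" "i < n" "j < n" "i \<noteq> j"
  shows "(\<Sum>xs\<in>profiles n. Q xs * h (xs ! i) (xs ! j)) = (\<Sum>xs\<in>profiles n. Q xs * h (xs ! 0) (xs ! 1))"
proof -
  define t where "t = Transposition.transpose i 0"
  define p where "p = Transposition.transpose 1 (t j) \<circ> t"
  have t_j: "t j \<noteq> 0" "t j < n"
    using assms unfolding t_def by (auto simp: Transposition.transpose_def)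
  have p_i: "p i = 0" and p_j: "p j = 1"
    using t_j unfolding p_def t_def by (auto simp: Transposition.transpose_def)
  have p: "p permutes {..<n}"
    using assms t_j unfolding p_def t_def by (intro permutes_compose permutes_swap_id) auto
  have "(\<Sum>xs\<in>profiles n. Q xs * h (xs ! i) (xs ! j))
      = (\<Sum>ys\<in>profiles n. Q (permute_list p ys) * h (permute_list p ys ! i) (permute_list p ys ! j))"
    by (rule sum.reindex_bij_betw[OF permute_list_bij_betw_profiles[OF p], symmetric])
  also have "\<dots> = (\<Sum>ys\<in>profiles n. Q ys * h (ys ! 0) (ys ! 1))"
  proof (rule sum.cong[OF refl])
    fix ys
    assume "ys \<in> profiles n"
    then have len: "length ys = n"
      by (simp add: profiles_def)
    then have "Q (permute_list p ys) = Q ys"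
      using assms(1) p unfolding symmetric_prior_def by blast
    moreover have "permute_list p ys ! i = ys ! 0" "permute_list p ys ! j = ys ! 1"
      using permute_list_nth[of p ys] p len assms p_i p_j by auto
    ultimately show "Q (permute_list p ys) * h (permute_list p ys ! i) (permute_list p ys ! j)
        = Q ys * h (ys ! 0) (ys ! 1)"
      by simp
  qed
  finally show ?thesis .
qed

definition joint :: "nat \<Rightarrow> (bool list \<Rightarrow> real) \<Rightarrow> bool \<Rightarrow> bool \<Rightarrow> real" where
  "joint n Q s t = (\<Sum>xs\<in>profiles n. if xs ! 0 = s \<and> xs ! 1 = t then Q xs else 0)"

definition pair_value ::
  "nat \<Rightarrow> (bool list \<Rightarrow> real) \<Rightarrow> (bool \<Rightarrow> bool pmf \<Rightarrow> real) \<Rightarrow> real \<times> real \<Rightarrow> real \<times> real \<Rightarrow> real" where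
  "pair_value n Q PS \<sigma> \<tau> = (\<Sum>s\<in>UNIV. \<Sum>t\<in>UNIV. joint n Q s t *
      (\<Sum>r\<in>UNIV. \<Sum>r'\<in>UNIV. rprob \<sigma> s r * rprob \<tau> t r' * PS r' (Pc n Q r)))"

lemma rprob_True_plus_False: "rprob \<sigma> s True + rprob \<sigma> s False = 1"
  by (simp add: rprob_def Let_def)

lemma expected_pair_payment:
  assumes "symmetric_prior n Q" "i < n" "j < n" "i \<noteq> j"
  shows "(\<Sum>xs\<in>profiles n. Q xs * (\<Sum>rs\<in>profiles n.
            (\<Prod>k<n. rprob (\<Sigma> k) (xs ! k) (rs ! k)) * PS (rs ! j) (Pc n Q (rs ! i))))
       = pair_value n Q PS (\<Sigma> i) (\<Sigma> j)"
proof -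
  define H where "H s t = (\<Sum>r\<in>UNIV. \<Sum>r'\<in>UNIV.
      rprob (\<Sigma> i) s r * rprob (\<Sigma> j) t r' * PS r' (Pc n Q r))" for s t
  have "(\<Sum>xs\<in>profiles n. Q xs * (\<Sum>rs\<in>profiles n.
            (\<Prod>k<n. rprob (\<Sigma> k) (xs ! k) (rs ! k)) * PS (rs ! j) (Pc n Q (rs ! i))))
      = (\<Sum>xs\<in>profiles n. Q xs * H (xs ! i) (xs ! j))"
    using sum_profiles_prod_pair[of i n j "\<lambda>k. rprob (\<Sigma> k) (_ ! k)" "\<lambda>r r'. PS r' (Pc n Q r)"]
      assms(2-4) rprob_True_plus_False
    unfolding H_def by (intro sum.cong) auto
  also have "\<dots> = (\<Sum>xs\<in>profiles n. Q xs * H (xs ! 0) (xs ! 1))"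
    by (rule symmetric_prior_sum_pair[OF assms])
  also have "\<dots> = (\<Sum>xs\<in>profiles n. \<Sum>s\<in>UNIV. \<Sum>t\<in>UNIV.
      (if xs ! 0 = s \<and> xs ! 1 = t then Q xs else 0) * H s t)"
    by (intro sum.cong) (auto simp: UNIV_bool)
  also have "\<dots> = pair_value n Q PS (\<Sigma> i) (\<Sigma> j)"
    unfolding pair_value_def joint_def H_def
    by (simp add: sum.swap[of _ "profiles n"] sum_distrib_right)
  finally show ?thesis .
qed

lemma util_eq_sum_pair_value:
  assumes "symmetric_prior n Q" "i < n"
  shows "util n Q PS \<Sigma> i = (\<Sum>j\<in>{..<n} - {i}. pair_value n Q PS (\<Sigma> i) (\<Sigma> j)) / (real n - 1)"
proof -
  have "util n Q PS \<Sigma> i = (\<Sum>j\<in>{..<n} - {i}. \<Sum>xs\<in>profiles n. Q xs * (\<Sum>rs\<in>profiles n.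
        (\<Prod>k<n. rprob (\<Sigma> k) (xs ! k) (rs ! k)) * PS (rs ! j) (Pc n Q (rs ! i)))) / (real n - 1)"
    unfolding util_def payment_def
    by (simp add: sum_distrib_left sum_distrib_right sum_divide_distrib sum.swap[of _ "{..<n} - {i}"] mult_ac)
  also have "\<dots> = (\<Sum>j\<in>{..<n} - {i}. pair_value n Q PS (\<Sigma> i) (\<Sigma> j)) / (real n - 1)"
    using expected_pair_payment[OF assms(1)] assms(2) by (intro arg_cong[where f="\<lambda>x. x / _"] sum.cong) auto
  finally show ?thesis .
qed

lemma joint_nonneg: "is_prior n Q \<Longrightarrow> 0 \<le> joint n Q s t"
  unfolding joint_def is_prior_def by (auto intro!: sum_nonneg)

lemma marg_eq_joint: "marg n Q s = joint n Q s False + joint n Q s True"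
  unfolding marg_def joint_def by (subst sum.distrib[symmetric]) (auto intro!: sum.cong)

lemma cond_eq_joint: "cond n Q s s' = joint n Q s' s / marg n Q s'"
  unfolding cond_def joint_def by (simp add: conj_commute)

lemma joint_commute:
  assumes "symmetric_prior n Q" "2 \<le> n"
  shows "joint n Q s t = joint n Q t s"
proof -
  have "joint n Q s t = (\<Sum>xs\<in>profiles n. Q xs * (\<lambda>a b. if b = s \<and> a = t then 1 else 0) (xs ! 1) (xs ! 0))"
    unfolding joint_def by (auto intro!: sum.cong)
  also have "\<dots> = (\<Sum>xs\<in>profiles n. Q xs * (\<lambda>a b. if b = s \<and> a = t then 1 else 0) (xs ! 0) (xs ! 1))"
    using assms by (intro symmetric_prior_sum_pair) auto
  also have "\<dots> = joint n Q t s"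
    unfolding joint_def by (auto intro!: sum.cong)
  finally show ?thesis .
qed

lemma Ex_diff: "Ex p (\<lambda>s. f s - g s) = Ex p f - Ex p g"
  unfolding Ex_def by (simp add: right_diff_distrib sum_subtractf)

lemma Ex_Pc:
  assumes "0 \<le> cond n Q True s" "cond n Q True s \<le> 1"
  shows "Ex (Pc n Q s) f = cond n Q True s * f True + (1 - cond n Q True s) * f False"
  using assms unfolding Ex_def Pc_def by (simp add: UNIV_bool)

lemma sum_sum_others:
  fixes f :: "'a \<Rightarrow> real"
  assumes "finite I" "D \<subseteq> I" "\<forall>j\<in>I - D. f j = 0"
  shows "(\<Sum>i\<in>D. \<Sum>j\<in>I - {i}. f j) = (real (card D) - 1) * (\<Sum>i\<in>D. f i)"
proof -
  have "(\<Sum>j\<in>I - {i}. f j) = (\<Sum>j\<in>D. f j) - f i" if "i \<in> D" for i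
  proof -
    have "(\<Sum>j\<in>I - {i}. f j) = (\<Sum>j\<in>I. f j) - f i"
      using assms that by (subst sum_diff1) auto
    also have "(\<Sum>j\<in>I. f j) = (\<Sum>j\<in>D. f j)"
      using assms by (intro sum.mono_neutral_right) auto
    finally show ?thesis .
  qed
  then have "(\<Sum>i\<in>D. \<Sum>j\<in>I - {i}. f j) = (\<Sum>i\<in>D. (\<Sum>j\<in>D. f j) - f i)"
    by simp
  then show ?thesis
    by (simp add: sum_subtractf algebra_simps)
qed

lemma le_floor_divide_add_one_iff:
  fixes a x :: real and k :: int
  assumes "0 < a"
  shows "k \<le> \<lfloor>x / a\<rfloor> + 1 \<longleftrightarrow> (of_int k - 1) * a \<le> x"
proof -
  have "k \<le> \<lfloor>x / a\<rfloor> + 1 \<longleftrightarrow> k - 1 \<le> \<lfloor>x / a\<rfloor>"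
    by linarith
  also have "\<dots> \<longleftrightarrow> of_int (k - 1) \<le> x / a"
    by (rule le_floor_iff)
  also have "\<dots> \<longleftrightarrow> (of_int k - 1) * a \<le> x"
    using assms by (simp add: pos_le_divide_eq)
  finally show ?thesis .
qed

locale peer_prediction =
  fixes n :: nat and Q :: "bool list \<Rightarrow> real" and PS :: "bool \<Rightarrow> bool pmf \<Rightarrow> real"
  assumes two_le_n: "2 \<le> n"
    and prior: "is_prior n Q"
    and symmetric: "symmetric_prior n Q"
    and marg_l_pos: "0 < marg n Q False"
    and marg_h_pos: "0 < marg n Q True"
    and cond_h_less: "cond n Q True False < cond n Q True True"
    and proper: "strictly_proper PS"
begin

abbreviation "Pl \<equiv> Pc n Q False"
abbreviation "Ph \<equiv> Pc n Q True"
abbreviation "ql \<equiv> cond n Q True False"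
abbreviation "qh \<equiv> cond n Q True True"

definition "gap_h = PS True Ph - PS False Ph"
definition "gap_l = PS False Pl - PS True Pl"
definition "loss_l = Ex Pl (\<lambda>s. PS s Pl - PS s Ph)"
definition "loss_h = Ex Ph (\<lambda>s. PS s Ph - PS s Pl)"

definition own_loss :: "real \<times> real \<Rightarrow> real" where
  "own_loss \<sigma> = fst \<sigma> * marg n Q False * loss_l + (1 - snd \<sigma>) * marg n Q True * loss_h"

definition spillover :: "real \<times> real \<Rightarrow> real" where
  "spillover \<tau> = fst \<tau> * marg n Q False * gap_h + (1 - snd \<tau>) * marg n Q True * gap_l"

(* The probability that j misreports and thereby disagrees with the report of i. *)
definition interaction :: "real \<times> real \<Rightarrow> real \<times> real \<Rightarrow> real" where
  "interaction \<sigma> \<tau> =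
     fst \<tau> * (joint n Q False False * (1 - fst \<sigma>) + joint n Q False True * (1 - snd \<sigma>))
     + (1 - snd \<tau>) * (joint n Q False True * fst \<sigma> + joint n Q True True * snd \<sigma>)"

lemma joint_True_False: "joint n Q True False = joint n Q False True"
  using joint_commute[OF symmetric two_le_n] .

lemma marg_l_eq: "marg n Q False = joint n Q False False + joint n Q False True"
  by (rule marg_eq_joint)

lemma marg_h_eq: "marg n Q True = joint n Q False True + joint n Q True True"
  by (simp add: marg_eq_joint joint_True_False)

lemma marg_l_mult_ql: "marg n Q False * ql = joint n Q False True"
  using marg_l_pos by (simp add: cond_eq_joint)

lemma marg_h_mult_qh: "marg n Q True * qh = joint n Q True True"
  using marg_h_pos by (simp add: cond_eq_joint)

lemma ql_bounds: "0 \<le> ql" "ql \<le> 1"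
  using marg_l_pos joint_nonneg[OF prior] by (auto simp: cond_eq_joint marg_l_eq)

lemma qh_bounds: "0 \<le> qh" "qh \<le> 1"
  using marg_h_pos joint_nonneg[OF prior] by (auto simp: cond_eq_joint marg_h_eq)

lemma Ex_Pl: "Ex Pl f = ql * f True + (1 - ql) * f False"
  using Ex_Pc ql_bounds .

lemma Ex_Ph: "Ex Ph f = qh * f True + (1 - qh) * f False"
  using Ex_Pc qh_bounds .

lemma Pl_neq_Ph: "Pl \<noteq> Ph"
proof
  assume "Pl = Ph"
  then have "pmf Pl True = pmf Ph True"
    by simp
  then show False
    using ql_bounds qh_bounds cond_h_less by (simp add: Pc_def)
qed

lemma loss_l_pos: "0 < loss_l"
  using proper Pl_neq_Ph unfolding strictly_proper_def loss_l_def Ex_diff by simp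

lemma loss_h_pos: "0 < loss_h"
  using proper Pl_neq_Ph unfolding strictly_proper_def loss_h_def Ex_diff by (simp add: eq_commute)

lemma gap_sum_pos: "0 < gap_h + gap_l"
proof -
  have "loss_l + loss_h = (qh - ql) * (gap_h + gap_l)"
    unfolding loss_l_def loss_h_def gap_h_def gap_l_def Ex_Pl Ex_Ph by (simp add: algebra_simps)
  then have "0 < (qh - ql) * (gap_h + gap_l)"
    using loss_l_pos loss_h_pos by linarith
  then show ?thesis
    using cond_h_less by (simp add: zero_less_mult_iff)
qed

lemma marg_l_mult_loss_l:
  "marg n Q False * loss_l = joint n Q False True * (PS True Pl - PS True Ph)
     + joint n Q False False * (PS False Pl - PS False Ph)"
proof -
  have "marg n Q False * loss_l = (marg n Q False * ql) * (PS True Pl - PS True Ph)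
      + (marg n Q False * (1 - ql)) * (PS False Pl - PS False Ph)"
    unfolding loss_l_def Ex_Pl by (simp add: algebra_simps)
  also have "marg n Q False * (1 - ql) = joint n Q False False"
    using marg_l_mult_ql marg_l_eq by (simp add: right_diff_distrib)
  finally show ?thesis
    by (simp only: marg_l_mult_ql)
qed

lemma marg_h_mult_loss_h:
  "marg n Q True * loss_h = joint n Q True True * (PS True Ph - PS True Pl)
     + joint n Q False True * (PS False Ph - PS False Pl)"
proof -
  have "marg n Q True * loss_h = (marg n Q True * qh) * (PS True Ph - PS True Pl)
      + (marg n Q True * (1 - qh)) * (PS False Ph - PS False Pl)"
    unfolding loss_h_def Ex_Ph by (simp add: algebra_simps)
  also have "marg n Q True * (1 - qh) = joint n Q False True"
    using marg_h_mult_qh marg_h_eq by (simp add: right_diff_distrib)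
  finally show ?thesis
    by (simp only: marg_h_mult_qh)
qed

lemma pair_value_gain:
  "pair_value n Q PS \<sigma> \<tau> - pair_value n Q PS truthful truthful
     = spillover \<tau> - own_loss \<sigma> - (gap_h + gap_l) * interaction \<sigma> \<tau>"
  unfolding own_loss_def spillover_def mult.assoc marg_l_mult_loss_l marg_h_mult_loss_h
  unfolding pair_value_def interaction_def gap_h_def gap_l_def marg_l_eq marg_h_eq
  by (simp add: UNIV_bool rprob_def truthful_def joint_True_False) algebra

lemma interaction_nonneg:
  assumes "is_strategy \<sigma>" "is_strategy \<tau>"
  shows "0 \<le> interaction \<sigma> \<tau>"
  using assms joint_nonneg[OF prior] unfolding interaction_def is_strategy_def
  by (intro add_nonneg_nonneg mult_nonneg_nonneg) auto

lemma interaction_truthful [simp]: "interaction \<sigma> truthful = 0"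
  by (simp add: interaction_def truthful_def)

lemma spillover_truthful [simp]: "spillover truthful = 0"
  by (simp add: spillover_def truthful_def)

lemma util_gain:
  assumes "i < n"
  shows "(real n - 1) * (util n Q PS S i - util n Q PS (\<lambda>_. truthful) i)
     = (\<Sum>j\<in>{..<n} - {i}. spillover (S j) - own_loss (S i) - (gap_h + gap_l) * interaction (S i) (S j))"
proof -
  have "util n Q PS S i - util n Q PS (\<lambda>_. truthful) i
      = (\<Sum>j\<in>{..<n} - {i}. pair_value n Q PS (S i) (S j) - pair_value n Q PS truthful truthful)
        / (real n - 1)"
    unfolding util_eq_sum_pair_value[OF symmetric assms] by (simp add: sum_subtractf diff_divide_distrib)
  moreover have "real n - 1 \<noteq> 0"
    using two_le_n by simp
  ultimately show ?thesis
    by (simp add: pair_value_gain)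
qed

lemma le_kE_h_iff:
  assumes "1 \<le> k" "k \<le> int n"
  shows "k \<le> kE_h n Q PS \<longleftrightarrow> (of_int k - 1) * gap_h \<le> (real n - 1) * loss_l"
proof (cases "0 < gap_h")
  case True
  then have "kE_h n Q PS = \<lfloor>(real n - 1) * loss_l / gap_h\<rfloor> + 1"
    unfolding kE_h_def Let_def by (simp add: gap_h_def loss_l_def)
  then show ?thesis
    using True by (simp add: le_floor_divide_add_one_iff)
next
  case False
  then have "kE_h n Q PS = int n"
    unfolding kE_h_def Let_def by (simp add: gap_h_def)
  moreover have "(of_int k - 1) * gap_h \<le> 0"
    using False assms(1) by (simp add: mult_nonneg_nonpos)
  moreover have "0 \<le> (real n - 1) * loss_l"
    using two_le_n loss_l_pos by simp
  ultimately show ?thesis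
    using assms(2) by linarith
qed

lemma le_kE_l_iff:
  assumes "1 \<le> k" "k \<le> int n"
  shows "k \<le> kE_l n Q PS \<longleftrightarrow> (of_int k - 1) * gap_l \<le> (real n - 1) * loss_h"
proof (cases "0 < gap_l")
  case True
  then have "kE_l n Q PS = \<lfloor>(real n - 1) * loss_h / gap_l\<rfloor> + 1"
    unfolding kE_l_def Let_def by (simp add: gap_l_def loss_h_def)
  then show ?thesis
    using True by (simp add: le_floor_divide_add_one_iff)
next
  case False
  then have "kE_l n Q PS = int n"
    unfolding kE_l_def Let_def by (simp add: gap_l_def)
  moreover have "(of_int k - 1) * gap_l \<le> 0"
    using False assms(1) by (simp add: mult_nonneg_nonpos)
  moreover have "0 \<le> (real n - 1) * loss_h"
    using two_le_n loss_h_pos by simp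
  ultimately show ?thesis
    using assms(2) by linarith
qed

lemma le_kE_iff:
  assumes "1 \<le> k" "k \<le> int n"
  shows "k \<le> kE n Q PS \<longleftrightarrow>
    (of_int k - 1) * gap_h \<le> (real n - 1) * loss_l \<and> (of_int k - 1) * gap_l \<le> (real n - 1) * loss_h"
  using le_kE_h_iff[OF assms] le_kE_l_iff[OF assms] assms(2) unfolding kE_def by linarith

lemma one_le_kE: "1 \<le> kE n Q PS"
  using le_kE_iff[of 1] two_le_n loss_l_pos loss_h_pos by simp

lemma spillover_le_own_loss:
  fixes k :: real
  assumes "is_strategy \<sigma>"
    and "(k - 1) * gap_h \<le> (real n - 1) * loss_l" "(k - 1) * gap_l \<le> (real n - 1) * loss_h"
  shows "(k - 1) * spillover \<sigma> \<le> (real n - 1) * own_loss \<sigma>"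
proof -
  have "fst \<sigma> * marg n Q False * ((k - 1) * gap_h) \<le> fst \<sigma> * marg n Q False * ((real n - 1) * loss_l)"
    using assms marg_l_pos by (intro mult_left_mono) (auto simp: is_strategy_def)
  moreover have "(1 - snd \<sigma>) * marg n Q True * ((k - 1) * gap_l)
      \<le> (1 - snd \<sigma>) * marg n Q True * ((real n - 1) * loss_h)"
    using assms marg_h_pos by (intro mult_left_mono) (auto simp: is_strategy_def)
  ultimately show ?thesis
    unfolding spillover_def own_loss_def by (simp add: algebra_simps)
qed

lemma coalition_gain_le:
  assumes "is_profile n S" "D \<subseteq> {..<n}" "\<forall>j\<in>{..<n} - D. S j = truthful"
  shows "(\<Sum>i\<in>D. (real n - 1) * (util n Q PS S i - util n Q PS (\<lambda>_. truthful) i))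
    \<le> (\<Sum>i\<in>D. (real (card D) - 1) * spillover (S i) - (real n - 1) * own_loss (S i))"
proof -
  have "(\<Sum>i\<in>D. (real n - 1) * (util n Q PS S i - util n Q PS (\<lambda>_. truthful) i))
      \<le> (\<Sum>i\<in>D. \<Sum>j\<in>{..<n} - {i}. spillover (S j) - own_loss (S i))"
  proof (intro sum_mono)
    fix i
    assume "i \<in> D"
    then have i: "i < n"
      using assms(2) by auto
    have "0 \<le> (gap_h + gap_l) * interaction (S i) (S j)" if "j < n" for j
      using gap_sum_pos interaction_nonneg assms(1) i that by (simp add: is_profile_def)
    then show "(real n - 1) * (util n Q PS S i - util n Q PS (\<lambda>_. truthful) i)
        \<le> (\<Sum>j\<in>{..<n} - {i}. spillover (S j) - own_loss (S i))"
      unfolding util_gain[OF i] by (intro sum_mono) auto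
  qed
  also have "\<dots> = (\<Sum>i\<in>D. \<Sum>j\<in>{..<n} - {i}. spillover (S j)) - (\<Sum>i\<in>D. (real n - 1) * own_loss (S i))"
    using assms(2) two_le_n by (auto simp: sum_subtractf of_nat_diff intro!: sum.cong)
  also have "(\<Sum>i\<in>D. \<Sum>j\<in>{..<n} - {i}. spillover (S j)) = (real (card D) - 1) * (\<Sum>i\<in>D. spillover (S i))"
    using assms(2,3) by (intro sum_sum_others) auto
  finally show ?thesis
    by (simp add: sum_subtractf sum_distrib_left)
qed

lemma small_coalition_gains_nothing:
  assumes "is_profile n S" "D \<subseteq> {..<n}" "int (card D) \<le> kE n Q PS"
    and "\<forall>j\<in>{..<n} - D. S j = truthful"
    and "\<forall>i\<in>D. util n Q PS (\<lambda>_. truthful) i \<le> util n Q PS S i"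
    and "i \<in> D"
  shows "util n Q PS S i = util n Q PS (\<lambda>_. truthful) i"
proof -
  define gain where "gain i = (real n - 1) * (util n Q PS S i - util n Q PS (\<lambda>_. truthful) i)" for i
  have finite: "finite D"
    using assms(2) finite_subset by blast
  have "1 \<le> int (card D)"
    using assms(6) finite by (auto simp: Suc_le_eq card_gt_0_iff)
  moreover have "int (card D) \<le> int n"
    using card_mono[OF _ assms(2)] by simp
  ultimately have per_agent: "(real (card D) - 1) * spillover (S j) - (real n - 1) * own_loss (S j) \<le> 0"
    if "j \<in> D" for j
    using le_kE_iff assms(1-3) that spillover_le_own_loss[of "S j" "real (card D)"]
    by (auto simp: is_profile_def)
  have "(\<Sum>j\<in>D. gain j)
      \<le> (\<Sum>j\<in>D. (real (card D) - 1) * spillover (S j) - (real n - 1) * own_loss (S j))"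
    unfolding gain_def by (rule coalition_gain_le[OF assms(1,2,4)])
  also have "\<dots> \<le> 0"
    using per_agent by (rule sum_nonpos)
  finally have "(\<Sum>j\<in>D. gain j) \<le> 0" .
  moreover have "\<forall>j\<in>D. 0 \<le> gain j"
    using assms(5) two_le_n by (simp add: gain_def)
  ultimately have "gain i = 0"
    using finite assms(6) sum_nonneg_eq_0_iff[of D gain] by (simp add: order_antisym sum_nonneg)
  then show ?thesis
    using two_le_n by (simp add: gain_def)
qed

theorem truthful_kE_strong_eq: "ex_ante_k_strong_eq n Q PS (kE n Q PS) (\<lambda>_. truthful)"
  unfolding ex_ante_k_strong_eq_def
proof (intro notI, elim exE conjE bexE)
  fix D S i
  assume "D \<subseteq> {..<n}" "int (card D) \<le> kE n Q PS" "is_profile n S"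
    "\<forall>j\<in>{..<n} - D. S j = truthful" "\<forall>i\<in>D. util n Q PS (\<lambda>_. truthful) i \<le> util n Q PS S i"
    "i \<in> D" "util n Q PS (\<lambda>_. truthful) i < util n Q PS S i"
  then show False
    using small_coalition_gains_nothing by force
qed

lemma uniform_deviation_gain:
  assumes "interaction \<sigma> \<sigma> = 0" "i < m" "m \<le> n"
  shows "(real n - 1) * (util n Q PS (\<lambda>j. if j < m then \<sigma> else truthful) i - util n Q PS (\<lambda>_. truthful) i)
    = (real m - 1) * spillover \<sigma> - (real n - 1) * own_loss \<sigma>"
proof -
  define S where "S j = (if j < m then \<sigma> else truthful)" for j
  have "(real n - 1) * (util n Q PS S i - util n Q PS (\<lambda>_. truthful) i)
      = (\<Sum>j\<in>{..<n} - {i}. spillover (S j) - own_loss \<sigma>)"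
    unfolding util_gain[OF order_less_le_trans[OF assms(2,3)]] using assms(1,2)
    by (intro sum.cong) (auto simp: S_def)
  also have "\<dots> = (\<Sum>j\<in>{..<n} - {i}. spillover (S j)) - (real n - 1) * own_loss \<sigma>"
    using assms two_le_n by (simp add: sum_subtractf of_nat_diff)
  also have "(\<Sum>j\<in>{..<n} - {i}. spillover (S j)) = (\<Sum>j\<in>{..<m} - {i}. spillover \<sigma>)"
    using assms(3) by (intro sum.mono_neutral_cong_right) (auto simp: S_def)
  also have "\<dots> = (real m - 1) * spillover \<sigma>"
    using assms(2) by (simp add: of_nat_diff)
  finally show ?thesis
    unfolding S_def .
qed

lemma uniform_deviation_breaks_strong_eq:
  assumes "is_strategy \<sigma>" "interaction \<sigma> \<sigma> = 0" "1 \<le> m" "m \<le> n" "int m \<le> k"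
    and "(real n - 1) * own_loss \<sigma> < (real m - 1) * spillover \<sigma>"
  shows "\<not> ex_ante_k_strong_eq n Q PS k (\<lambda>_. truthful)"
proof -
  define S where "S j = (if j < m then \<sigma> else truthful)" for j
  have gains: "util n Q PS (\<lambda>_. truthful) i < util n Q PS S i" if "i \<in> {..<m}" for i
  proof -
    have "0 < (real n - 1) * (util n Q PS S i - util n Q PS (\<lambda>_. truthful) i)"
      using uniform_deviation_gain[OF assms(2) _ assms(4)] that assms(6) unfolding S_def by simp
    then show ?thesis
      using two_le_n by (simp add: zero_less_mult_iff)
  qed
  have "is_profile n S"
    using assms(1) by (simp add: is_profile_def S_def is_strategy_def truthful_def)
  moreover have "\<forall>j\<in>{..<n} - {..<m}. S j = truthful"
    by (simp add: S_def)
  moreover have "{..<m} \<subseteq> {..<n}" "int (card {..<m}) \<le> k"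
    using assms(4,5) by auto
  moreover have "\<forall>i\<in>{..<m}. util n Q PS (\<lambda>_. truthful) i \<le> util n Q PS S i"
    using gains by (simp add: less_imp_le)
  moreover have "\<exists>i\<in>{..<m}. util n Q PS (\<lambda>_. truthful) i < util n Q PS S i"
    using gains[of 0] assms(3) by auto
  ultimately show ?thesis
    unfolding ex_ante_k_strong_eq_def by blast
qed

theorem not_strong_eq_above_kE:
  assumes "kE n Q PS < k" "k \<le> int n"
  shows "\<not> ex_ante_k_strong_eq n Q PS k (\<lambda>_. truthful)"
proof -
  have k: "1 \<le> k" "real (nat k) = of_int k"
    using one_le_kE assms(1) by auto
  then consider (h) "(real n - 1) * loss_l < (of_int k - 1) * gap_h"
    | (l) "(real n - 1) * loss_h < (of_int k - 1) * gap_l"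
    using le_kE_iff assms by fastforce
  then show ?thesis
  proof cases
    case h
    then have "(real n - 1) * own_loss (1, 1) < (real (nat k) - 1) * spillover (1, 1)"
      using marg_l_pos k by (simp add: own_loss_def spillover_def mult.left_commute)
    then show ?thesis
      using assms k by (intro uniform_deviation_breaks_strong_eq[where \<sigma>="(1, 1)" and m="nat k"])
        (auto simp: is_strategy_def interaction_def)
  next
    case l
    then have "(real n - 1) * own_loss (0, 0) < (real (nat k) - 1) * spillover (0, 0)"
      using marg_h_pos k by (simp add: own_loss_def spillover_def mult.left_commute)
    then show ?thesis
      using assms k by (intro uniform_deviation_breaks_strong_eq[where \<sigma>="(0, 0)" and m="nat k"])
        (auto simp: is_strategy_def interaction_def)
  qed
qed

end

theorem theorem1:
  fixes n :: nat and Q :: "bool list \<Rightarrow> real" and PS :: "bool \<Rightarrow> bool pmf \<Rightarrow> real"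
  assumes "n \<ge> 2"
    and "is_prior n Q" and "symmetric_prior n Q"
    and "marg n Q False > 0" and "marg n Q True > 0"
    and "cond n Q True True > cond n Q True False"
    and "cond n Q True False > 0" and "cond n Q False True > 0"
    and "strictly_proper PS"
  shows "ex_ante_k_strong_eq n Q PS (kE n Q PS) (\<lambda>_. truthful)
         \<and> (\<forall>k::int. kE n Q PS < k \<and> k \<le> int n \<longrightarrow> \<not> ex_ante_k_strong_eq n Q PS k (\<lambda>_. truthful))"
proof -
  interpret peer_prediction n Q PS
    using assms by unfold_locales
  show ?thesis
    using truthful_kE_strong_eq not_strong_eq_above_kE by blast
qed

end
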